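(* Fix constants $B>0$, $1\le\Gamma\le 3$, $0<\kappa\le 1$, and fixed Riemann data $\varrho_l>0$, $\varrho_r>0$, $\upsilon_l,\upsilon_r\ge 0$ with $\upsilon_r\le \upsilon_l-\frac{B}{\varrho_l^{\kappa}}$. For parameters $a>0$, $A>0$ (with $a<1/\max(\varrho_l,\varrho_r)$), let $p(\varrho)=A\left(\frac{\varrho}{1-a\varrho}\right)^{\Gamma}-\frac{B}{\varrho^{\kappa}}$, $p_l=p(\varrho_l)$, and let $\varrho_*=\varrho_*(a,A)\in(\varrho_l,1/a)$ be determined by $\upsilon_r=-p(\varrho_* )+\upsilon_l+p_l$. Then $$\lim_{a,A\to 0} A\left(\frac{\varrho_*}{1-a\varrho_*}\right)^{\Gamma}=\upsilon_l-\upsilon_r-\frac{B}{\varrho_l^{\kappa}}.$$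
   Context: $\varrho_*$ is the intermediate density of the shock-plus-contact-discontinuity Riemann solution of the system $\varrho_t+(\varrho\upsilon)_x=0$, $(\varrho(\upsilon+p))_t+(\varrho\upsilon(\upsilon+p))_x=0$ with Riemann data $(\varrho_l,\upsilon_l)$ for $x<0$ and $(\varrho_r,\upsilon_r)$ for $x>0$: the shock connects $(\varrho_l,\upsilon_l)$ to $(\varrho_*,\upsilon_r)$ and the contact discontinuity connects $(\varrho_*,\upsilon_r)$ to $(\varrho_r,\upsilon_r)$. The limit $a,A\to0$ is taken with $B,\Gamma,\kappa$ and the data fixed. *)

theory Defs
  imports "HOL-Analysis.Analysis"
begin

definition pres :: "real \<Rightarrow> real \<Rightarrow> real \<Rightarrow> real \<Rightarrow> real \<Rightarrow> real \<Rightarrow> real" where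
  "pres a A B \<Gamma> \<kappa> \<rho> = A * (\<rho> / (1 - a * \<rho>)) powr \<Gamma> - B / \<rho> powr \<kappa>"

end

theory Submission
  imports Defs
begin

(*
  With q(\<rho>) = \<rho> / (1 - a \<rho>), the defining relation of \<rho>s = \<rho>s a A reads
    A q(\<rho>s)^\<Gamma> = L + B / \<rho>s^\<kappa> + A q(\<rho>l)^\<Gamma>,   L = \<upsilon>l - \<upsilon>r - B / \<rho>l^\<kappa> \<ge> 0.
  The last term tends to 0 with a and A. So does B / \<rho>s^\<kappa>, because \<rho>s \<rightarrow> \<infinity>:
  as long as \<rho>s \<le> M and a \<le> 1/(2M), the left-hand side is at most A (2M)^\<Gamma>,
  which tends to 0 and so eventually cannot dominate B / \<rho>s^\<kappa> \<ge> B / M^\<kappa> > 0.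
*)

lemma filterlim_at_top_of_pressure_bound:
  fixes a A s :: "'b \<Rightarrow> real"
  assumes a: "(a \<longlongrightarrow> 0) F" and A: "(A \<longlongrightarrow> 0) F"
    and "0 < B" and "0 \<le> \<Gamma>" and "0 \<le> \<kappa>"
    and bound: "\<forall>\<^sub>F x in F. 0 < a x \<and> 0 < A x \<and> 0 < s x \<and>
                  B / s x powr \<kappa> \<le> A x * (s x / (1 - a x * s x)) powr \<Gamma>"
  shows "filterlim s at_top F"
proof (subst filterlim_at_top_gt[where c = 0], intro allI impI)
  fix M :: real
  assume "0 < M"
  have "\<forall>\<^sub>F x in F. a x < 1 / (2 * M)"
    using order_tendstoD(2)[OF a] \<open>0 < M\<close> by simp
  moreover have "((\<lambda>x. A x * (2 * M) powr \<Gamma>) \<longlongrightarrow> 0) F"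
    using tendsto_mult_left_zero[OF A] by simp
  then have "\<forall>\<^sub>F x in F. A x * (2 * M) powr \<Gamma> < B / M powr \<kappa>"
    by (rule order_tendstoD(2)) (use \<open>0 < B\<close> \<open>0 < M\<close> in simp)
  ultimately show "\<forall>\<^sub>F x in F. M \<le> s x"
    using bound
  proof eventually_elim
    case (elim x)
    show ?case
    proof (rule ccontr)
      assume "\<not> M \<le> s x"
      have "a x * s x \<le> a x * M"
        using elim \<open>\<not> M \<le> s x\<close> by simp
      also have "\<dots> \<le> 1 / 2"
        using elim \<open>0 < M\<close> by (simp add: field_simps)
      finally have "a x * s x \<le> 1 / 2" .
      then have "s x / (1 - a x * s x) \<le> s x / (1 / 2)"
        using elim by (intro divide_left_mono) auto
      also have "\<dots> \<le> 2 * M"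
        using \<open>\<not> M \<le> s x\<close> by simp
      finally have "A x * (s x / (1 - a x * s x)) powr \<Gamma> \<le> A x * (2 * M) powr \<Gamma>"
        using elim \<open>a x * s x \<le> 1 / 2\<close> \<open>0 \<le> \<Gamma>\<close> by (intro mult_left_mono powr_mono2) auto
      also have "\<dots> < B / M powr \<kappa>"
        using elim by simp
      also have "\<dots> \<le> B / s x powr \<kappa>"
        using elim \<open>\<not> M \<le> s x\<close> \<open>0 < B\<close> \<open>0 \<le> \<kappa>\<close>
        by (intro divide_left_mono powr_mono2 mult_pos_pos) auto
      finally show False
        using elim by simp
    qed
  qed
qed

lemma tendsto_const_divide_powr_at_top:
  fixes s :: "'b \<Rightarrow> real"
  assumes "filterlim s at_top F" and "0 < \<kappa>"
  shows "((\<lambda>x. c / s x powr \<kappa>) \<longlongrightarrow> 0) F"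
proof -
  have "((\<lambda>x. c * s x powr - \<kappa>) \<longlongrightarrow> 0) F"
    by (intro tendsto_mult_right_zero tendsto_neg_powr) (use assms in auto)
  moreover have "\<forall>\<^sub>F x in F. c * s x powr - \<kappa> = c / s x powr \<kappa>"
    using eventually_gt_at_top[of 0] filterlim_iff assms(1)
    by (force elim: eventually_mono simp: powr_minus_divide)
  ultimately show ?thesis
    by (rule Lim_transform_eventually)
qed

lemma tendsto_pressure_of_balance:
  fixes a A s :: "'b \<Rightarrow> real"
  assumes a: "(a \<longlongrightarrow> 0) F" and A: "(A \<longlongrightarrow> 0) F"
    and "0 < B" and "0 \<le> \<Gamma>" and "0 < \<kappa>" and "0 < \<rho>l" and "0 \<le> L"
    and balance: "\<forall>\<^sub>F x in F. 0 < a x \<and> 0 < A x \<and> \<rho>l < s x \<and>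
        A x * (s x / (1 - a x * s x)) powr \<Gamma> =
          L + B / s x powr \<kappa> + A x * (\<rho>l / (1 - a x * \<rho>l)) powr \<Gamma>"
  shows "((\<lambda>x. A x * (s x / (1 - a x * s x)) powr \<Gamma>) \<longlongrightarrow> L) F"
proof -
  have "filterlim s at_top F"
    using a A \<open>0 < B\<close> \<open>0 \<le> \<Gamma>\<close>
  proof (rule filterlim_at_top_of_pressure_bound)
    show "\<forall>\<^sub>F x in F. 0 < a x \<and> 0 < A x \<and> 0 < s x \<and>
        B / s x powr \<kappa> \<le> A x * (s x / (1 - a x * s x)) powr \<Gamma>"
      using balance by eventually_elim (use \<open>0 < \<rho>l\<close> \<open>0 \<le> L\<close> in auto)
  qed (use \<open>0 < \<kappa>\<close> in simp)
  then have "((\<lambda>x. B / s x powr \<kappa>) \<longlongrightarrow> 0) F"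
    using \<open>0 < \<kappa>\<close> by (rule tendsto_const_divide_powr_at_top)
  moreover have "((\<lambda>x. A x * (\<rho>l / (1 - a x * \<rho>l)) powr \<Gamma>) \<longlongrightarrow> 0) F"
    using \<open>0 < \<rho>l\<close> by (auto intro!: tendsto_eq_intros a A)
  ultimately have "((\<lambda>x. L + B / s x powr \<kappa> + A x * (\<rho>l / (1 - a x * \<rho>l)) powr \<Gamma>) \<longlongrightarrow> L) F"
    using tendsto_add[OF tendsto_add[OF tendsto_const]] by fastforce
  then show ?thesis
    by (rule Lim_transform_eventually) (use balance in \<open>eventually_elim, simp\<close>)
qed

theorem lemma3p2:
  fixes B \<Gamma> \<kappa> \<rho>l \<rho>r \<upsilon>l \<upsilon>r :: real
    and \<rho>s :: "real \<Rightarrow> real \<Rightarrow> real"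
  assumes "B > 0" and "1 \<le> \<Gamma>" and "\<Gamma> \<le> 3" and "0 < \<kappa>" and "\<kappa> \<le> 1"
    and "\<rho>l > 0" and "\<rho>r > 0" and "\<upsilon>l \<ge> 0" and "\<upsilon>r \<ge> 0"
    and "\<upsilon>r \<le> \<upsilon>l - B / \<rho>l powr \<kappa>"
    and \<rho>s_def: "\<And>a A. 0 < a \<Longrightarrow> 0 < A \<Longrightarrow> a < 1 / max \<rho>l \<rho>r \<Longrightarrow>
        \<rho>s a A \<in> {\<rho>l<..<1 / a} \<and>
        \<upsilon>r = - pres a A B \<Gamma> \<kappa> (\<rho>s a A) + \<upsilon>l + pres a A B \<Gamma> \<kappa> \<rho>l"
  shows "((\<lambda>(a, A). A * (\<rho>s a A / (1 - a * \<rho>s a A)) powr \<Gamma>)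
           \<longlongrightarrow> \<upsilon>l - \<upsilon>r - B / \<rho>l powr \<kappa>)
         (at (0, 0) within {x :: real \<times> real. 0 < fst x \<and> 0 < snd x})"
proof -
  let ?F = "at (0::real, 0::real) within {x :: real \<times> real. 0 < fst x \<and> 0 < snd x}"
  have a_lim: "(fst \<longlongrightarrow> 0) ?F" and A_lim: "(snd \<longlongrightarrow> 0) ?F"
    using tendsto_fst[OF tendsto_ident_at] tendsto_snd[OF tendsto_ident_at] by auto
  have "\<forall>\<^sub>F x in ?F. fst x < 1 / max \<rho>l \<rho>r"
    by (rule order_tendstoD(2)[OF a_lim]) (use \<open>\<rho>l > 0\<close> in simp)
  moreover have "\<forall>\<^sub>F x in ?F. 0 < fst x \<and> 0 < snd x"
    by (simp add: eventually_at_filter)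
  ultimately have "\<forall>\<^sub>F x in ?F. 0 < fst x \<and> 0 < snd x \<and> \<rho>l < \<rho>s (fst x) (snd x) \<and>
      snd x * (\<rho>s (fst x) (snd x) / (1 - fst x * \<rho>s (fst x) (snd x))) powr \<Gamma> =
        (\<upsilon>l - \<upsilon>r - B / \<rho>l powr \<kappa>) + B / \<rho>s (fst x) (snd x) powr \<kappa>
        + snd x * (\<rho>l / (1 - fst x * \<rho>l)) powr \<Gamma>"
  proof eventually_elim
    case (elim x)
    with \<rho>s_def[of "fst x" "snd x"] show ?case
      by (auto simp: pres_def)
  qed
  from tendsto_pressure_of_balance[OF a_lim A_lim _ _ _ _ _ this] show ?thesis
    unfolding case_prod_beta' using assms by simp
qed

end
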